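(* Let $X_0, \dots, X_{T-1}$ be a binary sequence decomposing into alternating blocks $1^{L_1}0^{G_1}\cdots 1^{L_m}0^{G_m}$, with $\rho = T^{-1}\sum_t X_t$ and $q = m/T$. For a word $w \in \{0,1\}^\ell$ let $\nu(w) = \frac{1}{T-\ell+1}\sum_{t=0}^{T-\ell}\prod_{j=0}^{\ell-1}\mathbf{1}[X_{t+j} = w_j]$. Then there are fixed affine-linear functions $F_w$ ($w \in \{0,1\}^4$), independent of the sequence, such that for every $w \in \{0,1\}^4$, \[ \nu(w) = F_w\bigl(\rho, q, \nu(000), \nu(010), \nu(0000), \nu(0010), \nu(0100), \nu(0110)\bigr) + o(1) \] as $T \to \infty$. That is, beyond the depth-$4$ parameters $(\rho, q, \nu(000), \nu(010))$, the sixteen $4$-word frequencies involve exactly the four new free parameters $\nu(0000), \nu(0010), \nu(0100), \nu(0110)$, for a total of $8$ parameters through depth $5$. *)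

theory Defs
  imports Complex_Main
begin

text \<open>Binary sequences are bool lists (True = 1, False = 0), indexed from 0.\<close>

definition block_seq :: "nat \<Rightarrow> (nat \<Rightarrow> nat) \<Rightarrow> (nat \<Rightarrow> nat) \<Rightarrow> bool list" where
  "block_seq m L G = concat (map (\<lambda>i. replicate (L i) True @ replicate (G i) False) [0..<m])"

definition rho :: "bool list \<Rightarrow> real" where
  "rho xs = (\<Sum>t<length xs. if xs ! t then 1 else 0) / real (length xs)"

definition nu :: "bool list \<Rightarrow> bool list \<Rightarrow> real" where
  "nu xs w = (\<Sum>t\<in>{0..int (length xs) - int (length w)}.
                 \<Prod>j<length w. if xs ! (nat t + j) = w ! j then 1 else 0)
             / (real (length xs) - real (length w) + 1)"

definition params :: "bool list \<Rightarrow> nat \<Rightarrow> real list" where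
  "params xs m = [rho xs, real m / real (length xs),
     nu xs [False,False,False], nu xs [False,True,False],
     nu xs [False,False,False,False], nu xs [False,False,True,False],
     nu xs [False,True,False,False], nu xs [False,True,True,False]]"

end

theory Submission
  imports Defs "HOL-Library.Sublist"
begin

text \<open>Write C(u) for the number of occurrences of the word u in X, so that C([]) = T + 1.
  Every occurrence of u that does not end X extends to exactly one occurrence of u0 or u1, and
  every one that does not start X to exactly one of 0u or 1u; hence the counts satisfy the Kolmogorov
  consistency relations C(u) = C(u0) + C(u1) = C(0u) + C(1u) up to an error of at most 1.
  Solving these relations expresses each count of a word of length 4 as a fixed affine function
  of T, C(1), C(10), C(000), C(010), C(0000), C(0010), C(0100), C(0110), up to a bounded error.
  Dividing by T - 3 turns counts into frequencies at the cost of O(1/T), and in a block sequence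
  the word 10 occurs exactly m times, so C(10)/T = q.\<close>

lemma prefix_snoc_iff:
  "prefix u s \<longleftrightarrow> prefix (u @ [False]) s \<or> prefix (u @ [True]) s \<or> s = u"
proof
  assume "prefix u s"
  then obtain zs where s: "s = u @ zs" by (auto simp: prefix_def)
  show "prefix (u @ [False]) s \<or> prefix (u @ [True]) s \<or> s = u"
  proof (cases zs)
    case (Cons b z)
    then have "prefix (u @ [b]) s" using s by (auto simp: prefix_def)
    then show ?thesis by (cases b) auto
  qed (use s in simp)
qed (auto simp: prefix_def)

lemma prefix_drop_iff_nth:
  assumes "t + length w \<le> length xs"
  shows "prefix w (drop t xs) \<longleftrightarrow> (\<forall>j<length w. xs ! (t + j) = w ! j)"
proof
  assume "prefix w (drop t xs)"
  then obtain zs where "drop t xs = w @ zs" by (auto simp: prefix_def)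
  then show "\<forall>j<length w. xs ! (t + j) = w ! j"
    using assms by (metis le_add1 le_trans nth_append nth_drop)
next
  assume "\<forall>j<length w. xs ! (t + j) = w ! j"
  then have "take (length w) (drop t xs) = w"
    using assms by (intro nth_equalityI) auto
  then show "prefix w (drop t xs)"
    by (metis take_is_prefix)
qed

fun occurrences :: "'a list \<Rightarrow> 'a list \<Rightarrow> nat" where
  "occurrences w [] = (if w = [] then 1 else 0)"
| "occurrences w (x # xs) = (if prefix w (x # xs) then 1 else 0) + occurrences w xs"

lemma occurrences_Nil_word [simp]: "occurrences [] xs = Suc (length xs)"
  by (induction xs) auto

lemma occurrences_le: "occurrences w xs \<le> Suc (length xs) - length w"
proof (induction xs)
  case (Cons x xs)
  then show ?case by (auto dest: prefix_length_le)
qed simp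

lemma occurrences_eq_sum:
  "occurrences w xs = (\<Sum>t\<le>length xs. if prefix w (drop t xs) then 1 else 0)"
proof (induction xs)
  case (Cons x xs)
  then show ?case
    by (simp only: occurrences.simps length_Cons sum.atMost_Suc_shift drop_0 drop_Suc_Cons)
qed simp

lemma occurrences_extend_left:
  "occurrences u xs = occurrences (False # u) xs + occurrences (True # u) xs
     + (if prefix u xs then 1 else 0)"
proof (induction xs)
  case (Cons x xs)
  then show ?case by (cases x) auto
qed simp

lemma occurrences_extend_right:
  "occurrences u xs = occurrences (u @ [False]) xs + occurrences (u @ [True]) xs
     + (if suffix u xs then 1 else 0)"
proof (induction xs)
  case Nil
  then show ?case by (simp add: suffix_def)
next
  case (Cons x xs)
  let ?s = "x # xs"
  have "\<not> (prefix (u @ [False]) ?s \<and> prefix (u @ [True]) ?s)"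
    by (auto simp: prefix_def)
  moreover have "\<not> (prefix (u @ [b]) ?s \<and> ?s = u)" for b
    by (auto dest: prefix_length_le)
  moreover have "suffix u ?s \<longleftrightarrow> u = ?s \<or> suffix u xs"
    by (auto simp: suffix_def Cons_eq_append_conv)
  moreover have "\<not> (u = ?s \<and> suffix u xs)"
    using suffix_length_le by fastforce
  ultimately show ?case
    using Cons.IH prefix_snoc_iff[of u ?s] by (auto split: if_splits)
qed

definition approx_consistent :: "(bool list \<Rightarrow> real) \<Rightarrow> bool list \<Rightarrow> bool" where
  "approx_consistent C u \<longleftrightarrow>
     C u - 1 \<le> C (u @ [False]) + C (u @ [True]) \<and> C (u @ [False]) + C (u @ [True]) \<le> C u \<and>
     C u - 1 \<le> C (False # u) + C (True # u) \<and> C (False # u) + C (True # u) \<le> C u"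

lemma approx_consistent_occurrences: "approx_consistent (\<lambda>u. real (occurrences u xs)) u"
proof -
  have "real (occurrences u xs) = real (occurrences (u @ [False]) xs)
      + real (occurrences (u @ [True]) xs) + (if suffix u xs then 1 else 0)"
    using occurrences_extend_right[of u xs] by simp
  moreover have "real (occurrences u xs) = real (occurrences (False # u) xs)
      + real (occurrences (True # u) xs) + (if prefix u xs then 1 else 0)"
    using occurrences_extend_left[of u xs] by simp
  ultimately show ?thesis
    unfolding approx_consistent_def by (auto split: if_splits)
qed

lemma occurrences_10_replicate_False:
  "occurrences [True, False] (replicate n False @ ys) = occurrences [True, False] ys"
  by (induction n) auto

lemma occurrences_10_block:
  assumes "1 \<le> l" "1 \<le> g"
  shows "occurrences [True, False] (replicate l True @ replicate g False @ ys)
    = Suc (occurrences [True, False] ys)"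
  using assms(1)
proof (induction l rule: dec_induct)
  case base
  obtain g' where "g = Suc g'" using assms(2) by (cases g) auto
  then show ?case by (simp add: occurrences_10_replicate_False)
next
  case (step l)
  then show ?case by (cases l) auto
qed

lemma occurrences_10_block_seq:
  assumes "\<forall>i<m. 1 \<le> L i \<and> 1 \<le> G i"
  shows "occurrences [True, False] (block_seq m L G) = m"
  using assms
proof (induction m arbitrary: L G)
  case 0
  then show ?case by (simp add: block_seq_def)
next
  case (Suc m)
  have "block_seq (Suc m) L G
      = replicate (L 0) True @ replicate (G 0) False @ block_seq m (L \<circ> Suc) (G \<circ> Suc)"
    unfolding block_seq_def by (simp add: upt_conv_Cons map_Suc_upt[symmetric] comp_def del: upt_Suc)
  moreover have "occurrences [True, False] (block_seq m (L \<circ> Suc) (G \<circ> Suc)) = m"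
    using Suc by (intro Suc.IH) auto
  ultimately show ?case
    using Suc.prems by (simp add: occurrences_10_block)
qed

lemma nu_eq_occurrences:
  assumes "length w \<le> length xs"
  shows "nu xs w = real (occurrences w xs) / (real (length xs) - real (length w) + 1)"
proof -
  let ?T = "length xs" and ?l = "length w"
  let ?match = "\<lambda>t. \<Prod>j<?l. if xs ! (t + j) = w ! j then 1 else 0 :: real"
  have "{0..int ?T - int ?l} = int ` {0..?T - ?l}"
    using assms by (simp add: image_int_atLeastAtMost of_nat_diff)
  then have "(\<Sum>t\<in>{0..int ?T - int ?l}. ?match (nat t)) = (\<Sum>t\<in>{0..?T - ?l}. ?match t)"
    by (simp add: sum.reindex inj_on_def)
  also have "\<dots> = (\<Sum>t\<in>{0..?T - ?l}. if prefix w (drop t xs) then 1 else 0)"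
    using assms by (intro sum.cong) (auto simp: prefix_drop_iff_nth prod_zero)
  also have "\<dots> = (\<Sum>t\<le>?T. if prefix w (drop t xs) then 1 else 0)"
    by (intro sum.mono_neutral_left) (auto dest!: prefix_length_le)
  also have "\<dots> = real (occurrences w xs)"
    unfolding occurrences_eq_sum of_nat_sum by (intro sum.cong) auto
  finally show ?thesis by (simp add: nu_def)
qed

lemma rho_eq_occurrences: "rho xs = real (occurrences [True] xs) / real (length xs)"
proof -
  have "(\<Sum>t<length xs. if xs ! t then 1 else 0 :: real) = real (occurrences [True] xs)"
    by (induction xs) (simp_all del: sum.lessThan_Suc add: sum.lessThan_Suc_shift)
  then show ?thesis by (simp add: rho_def)
qed

lemma ratio_nonneg_le_1:
  fixes c D :: real
  assumes "0 \<le> c" "c \<le> D"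
  shows "0 \<le> c / D \<and> c / D \<le> 1"
  using assms by (cases "D = 0") auto

lemma abs_ratio_diff_le:
  fixes c D s :: real
  assumes "0 \<le> c" "c \<le> D" "0 < s" "s \<le> D"
  shows "\<bar>c / D - c / s\<bar> \<le> (D - s) / s"
proof -
  have factor: "c / s - c / D = c / D * ((D - s) / s)"
    using assms by (simp add: field_simps)
  have ratio: "0 \<le> c / D" "c / D \<le> 1"
    using ratio_nonneg_le_1 assms by auto
  have gap: "0 \<le> (D - s) / s"
    using assms by simp
  have "\<bar>c / D - c / s\<bar> = c / D * ((D - s) / s)"
    using factor ratio gap by (metis abs_minus_commute abs_of_nonneg mult_nonneg_nonneg)
  also have "\<dots> \<le> (D - s) / s"
    by (rule mult_left_le_one_le[OF gap ratio])
  finally show ?thesis .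
qed

lemma occurrences_le_real:
  assumes "length w \<le> Suc (length xs)"
  shows "real (occurrences w xs) \<le> real (length xs) + 1 - real (length w)"
  using occurrences_le[of w xs] assms by (simp add: of_nat_diff)

lemma nu_nonneg_le_1: "0 \<le> nu xs w \<and> nu xs w \<le> 1"
proof (cases "length w \<le> length xs")
  case True
  then show ?thesis
    using occurrences_le_real[of w xs]
    by (auto simp: nu_eq_occurrences intro!: ratio_nonneg_le_1)
qed (simp add: nu_def)

lemma rho_nonneg_le_1: "0 \<le> rho xs \<and> rho xs \<le> 1"
  unfolding rho_eq_occurrences using occurrences_le_real[of "[True]" xs]
  by (intro ratio_nonneg_le_1) auto

lemma q_nonneg_le_1:
  assumes "m = occurrences [True, False] xs"
  shows "0 \<le> real m / real (length xs) \<and> real m / real (length xs) \<le> 1"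
proof -
  have "m \<le> length xs"
    using occurrences_le[of "[True, False]" xs] assms by simp
  then show ?thesis
    by (intro ratio_nonneg_le_1) auto
qed

lemma less_8_cases:
  fixes i :: nat
  assumes "i < 8"
  obtains "i = 0" | "i = 1" | "i = 2" | "i = 3" | "i = 4" | "i = 5" | "i = 6" | "i = 7"
  using assms by (auto simp: less_Suc_eq numeral_eq_Suc)

lemma params_abs_le_1:
  assumes "m = occurrences [True, False] xs" "i < 8"
  shows "\<bar>params xs m ! i\<bar> \<le> 1"
  using assms(2) rho_nonneg_le_1[of xs] q_nonneg_le_1[OF assms(1)] nu_nonneg_le_1[of xs]
  by (cases rule: less_8_cases) (auto simp: params_def)

definition basis_words :: "bool list list" where
  "basis_words = [[True], [True, False], [False, False, False], [False, True, False],
     [False, False, False, False], [False, False, True, False],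
     [False, True, False, False], [False, True, True, False]]"

lemma params_as_ratio:
  assumes "m = occurrences [True, False] xs" "4 \<le> length xs" "i < 8"
  obtains D where "real (length xs) - 3 \<le> D" "D \<le> real (length xs)"
    "real (occurrences (basis_words ! i) xs) \<le> D"
    "params xs m ! i = real (occurrences (basis_words ! i) xs) / D"
proof -
  let ?u = "basis_words ! i" and ?T = "real (length xs)"
  consider "i = 0" | "i = 1" | "2 \<le> i" "params xs m ! i = nu xs ?u" "length ?u \<in> {3, 4}"
    using assms(3) by (cases rule: less_8_cases) (auto simp: params_def basis_words_def)
  then show thesis
  proof cases
    case 1
    then show thesis
      using that[of ?T] occurrences_le_real[of ?u xs] assms(2)
      by (auto simp: params_def basis_words_def rho_eq_occurrences)
  next
    case 2
    then show thesis
      using that[of ?T] occurrences_le_real[of ?u xs] assms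
      by (auto simp: params_def basis_words_def)
  next
    case 3
    then show thesis
      using that[of "?T - real (length ?u) + 1"] occurrences_le_real[of ?u xs] assms(2)
      by (auto simp: nu_eq_occurrences)
  qed
qed

lemma params_near_count_ratio:
  assumes "m = occurrences [True, False] xs" "4 \<le> length xs" "i < 8"
  shows "\<bar>params xs m ! i - real (occurrences (basis_words ! i) xs) / (real (length xs) - 3)\<bar>
    \<le> 3 / (real (length xs) - 3)"
proof -
  obtain D where D: "real (length xs) - 3 \<le> D" "D \<le> real (length xs)"
    "real (occurrences (basis_words ! i) xs) \<le> D"
    "params xs m ! i = real (occurrences (basis_words ! i) xs) / D"
    using params_as_ratio[OF assms] .
  have "\<bar>params xs m ! i - real (occurrences (basis_words ! i) xs) / (real (length xs) - 3)\<bar>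
      \<le> (D - (real (length xs) - 3)) / (real (length xs) - 3)"
    unfolding D(4) using D(1-3) assms(2) by (intro abs_ratio_diff_le) auto
  also have "\<dots> \<le> 3 / (real (length xs) - 3)"
    using D(2) assms(2) by (intro divide_right_mono) auto
  finally show ?thesis .
qed

lemma length_4_cases:
  assumes "length w = 4"
  obtains a b c d where "w = [a, b, c, d]"
  using assms by (auto simp: length_Suc_conv numeral_eq_Suc)

text \<open>The row of w consists of the coefficient of T and the coefficients of the counts of
  basis_words, in the order of params. It is found by eliminating one word at a time, e.g.
  C(1111) = C(111) - C(1110) = (C(11) - C(110)) - (C(110) - C(0110)) = ... up to O(1).\<close>
fun affine_form :: "bool list \<Rightarrow> real \<times> real list" where
  "affine_form [False, False, False, False] = (0, [0, 0, 0, 0, 1, 0, 0, 0])"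
| "affine_form [False, False, False, True]  = (0, [0, 0, 1, 0, -1, 0, 0, 0])"
| "affine_form [False, False, True, False]  = (0, [0, 0, 0, 0, 0, 1, 0, 0])"
| "affine_form [False, False, True, True]   = (1, [-1, -1, -1, 0, 0, -1, 0, 0])"
| "affine_form [False, True, False, False]  = (0, [0, 0, 0, 0, 0, 0, 1, 0])"
| "affine_form [False, True, False, True]   = (0, [0, 0, 0, 1, 0, 0, -1, 0])"
| "affine_form [False, True, True, False]   = (0, [0, 0, 0, 0, 0, 0, 0, 1])"
| "affine_form [False, True, True, True]    = (0, [0, 1, 0, -1, 0, 0, 0, -1])"
| "affine_form [True, False, False, False]  = (0, [0, 0, 1, 0, -1, 0, 0, 0])"
| "affine_form [True, False, False, True]   = (1, [-1, -1, -2, 0, 1, 0, 0, 0])"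
| "affine_form [True, False, True, False]   = (0, [0, 0, 0, 1, 0, -1, 0, 0])"
| "affine_form [True, False, True, True]    = (-1, [1, 2, 1, -1, 0, 1, 0, 0])"
| "affine_form [True, True, False, False]   = (1, [-1, -1, -1, 0, 0, 0, -1, 0])"
| "affine_form [True, True, False, True]    = (-1, [1, 2, 1, -1, 0, 0, 1, 0])"
| "affine_form [True, True, True, False]    = (0, [0, 1, 0, -1, 0, 0, 0, -1])"
| "affine_form [True, True, True, True]     = (0, [1, -3, 0, 2, 0, 0, 0, 1])"
| "affine_form _ = (0, replicate 8 0)"

lemma affine_form_abs_bounds:
  assumes "length w = 4"
  shows "\<bar>fst (affine_form w)\<bar> \<le> 1 \<and> (\<Sum>i<8. \<bar>snd (affine_form w) ! i\<bar>) \<le> 7"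
proof -
  obtain a b c d where "w = [a, b, c, d]" using length_4_cases assms .
  then show ?thesis
    by (cases a; cases b; cases c; cases d) (simp_all add: eval_nat_numeral)
qed

lemma affine_form_approximates:
  fixes C :: "bool list \<Rightarrow> real"
  assumes consistent: "\<And>u. length u < 4 \<Longrightarrow> approx_consistent C u"
    and empty: "C [] = T + 1" and w: "length w = 4"
  shows "\<bar>C w - (fst (affine_form w) * T + (\<Sum>i<8. snd (affine_form w) ! i * C (basis_words ! i)))\<bar>
    \<le> 10"
proof -
  have "\<forall>x y z. approx_consistent C [] \<and> approx_consistent C [x] \<and> approx_consistent C [x, y]
      \<and> approx_consistent C [x, y, z]"
    using consistent by simp
  note relations = this[unfolded all_bool_eq approx_consistent_def, simplified]
  obtain a b c d where w_eq: "w = [a, b, c, d]" using length_4_cases w .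
  show ?thesis
    unfolding w_eq
    apply (cases a; cases b; cases c; cases d)
    apply (simp_all add: basis_words_def eval_nat_numeral abs_le_iff)
    using relations empty by (smt (z3))+
qed

lemma abs_diff_affine_perturb:
  fixes b p y :: "'i \<Rightarrow> real"
  assumes "\<bar>x - (a + (\<Sum>i\<in>I. b i * y i))\<bar> \<le> e" "\<And>i. i \<in> I \<Longrightarrow> \<bar>p i - y i\<bar> \<le> d"
  shows "\<bar>x - (a' + (\<Sum>i\<in>I. b i * p i))\<bar> \<le> e + \<bar>a - a'\<bar> + d * (\<Sum>i\<in>I. \<bar>b i\<bar>)"
proof -
  have "\<bar>(\<Sum>i\<in>I. b i * p i) - (\<Sum>i\<in>I. b i * y i)\<bar> = \<bar>\<Sum>i\<in>I. b i * (p i - y i)\<bar>"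
    by (simp add: sum_subtractf right_diff_distrib)
  also have "\<dots> \<le> (\<Sum>i\<in>I. \<bar>b i\<bar> * d)"
    using assms(2) by (intro order_trans[OF sum_abs] sum_mono) (simp add: abs_mult mult_left_mono)
  also have "\<dots> = d * (\<Sum>i\<in>I. \<bar>b i\<bar>)"
    by (simp add: sum_distrib_left mult.commute)
  finally show ?thesis
    using assms(1) by (simp add: abs_le_iff) linarith
qed

lemma four_word_frequency_error_long:
  assumes m: "m = occurrences [True, False] xs" and w: "length w = 4" and T: "7 \<le> length xs"
  shows "\<bar>nu xs w - (fst (affine_form w) + (\<Sum>i<8. snd (affine_form w) ! i * params xs m ! i))\<bar>
    \<le> 34 / (real (length xs) - 3)"
proof -
  let ?T = "real (length xs)" and ?\<alpha> = "fst (affine_form w)" and ?\<beta> = "\<lambda>i. snd (affine_form w) ! i"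
  define C where "C u = real (occurrences u xs)" for u
  define s where "s = ?T - 3"
  have s: "0 < s" "?T = s + 3"
    using T by (auto simp: s_def)
  have "\<bar>C w - (?\<alpha> * ?T + (\<Sum>i<8. ?\<beta> i * C (basis_words ! i)))\<bar> \<le> 10"
    using w by (intro affine_form_approximates) (auto simp: C_def approx_consistent_occurrences)
  then have "\<bar>(C w - (?\<alpha> * ?T + (\<Sum>i<8. ?\<beta> i * C (basis_words ! i)))) / s\<bar> \<le> 10 / s"
    using s(1) by (simp add: abs_divide divide_right_mono)
  then have "\<bar>C w / s - (?\<alpha> * ?T / s + (\<Sum>i<8. ?\<beta> i * (C (basis_words ! i) / s)))\<bar> \<le> 10 / s"
    by (simp add: diff_divide_distrib add_divide_distrib sum_divide_distrib)
  then have "\<bar>C w / s - (?\<alpha> + (\<Sum>i<8. ?\<beta> i * params xs m ! i))\<bar>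
      \<le> 10 / s + \<bar>?\<alpha> * ?T / s - ?\<alpha>\<bar> + 3 / s * (\<Sum>i<8. \<bar>?\<beta> i\<bar>)"
    by (rule abs_diff_affine_perturb)
      (use params_near_count_ratio[OF m] T in \<open>auto simp: C_def s_def\<close>)
  also have "\<bar>?\<alpha> * ?T / s - ?\<alpha>\<bar> = 3 * \<bar>?\<alpha>\<bar> / s"
    using s by (simp add: field_simps abs_divide abs_mult)
  also have "10 / s + 3 * \<bar>?\<alpha>\<bar> / s + 3 / s * (\<Sum>i<8. \<bar>?\<beta> i\<bar>)
      = (10 + 3 * \<bar>?\<alpha>\<bar> + 3 * (\<Sum>i<8. \<bar>?\<beta> i\<bar>)) / s"
    by (simp add: add_divide_distrib)
  also have "\<dots> \<le> 34 / s"
    using affine_form_abs_bounds[OF w] s(1) by (intro divide_right_mono) auto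
  finally show ?thesis
    using T w by (simp add: nu_eq_occurrences C_def s_def)
qed

lemma four_word_frequency_error_short:
  assumes m: "m = occurrences [True, False] xs" and w: "length w = 4"
  shows "\<bar>nu xs w - (fst (affine_form w) + (\<Sum>i<8. snd (affine_form w) ! i * params xs m ! i))\<bar>
    \<le> 9"
proof -
  let ?\<alpha> = "fst (affine_form w)" and ?\<beta> = "\<lambda>i. snd (affine_form w) ! i"
  have "\<bar>nu xs w - (0 + (\<Sum>i<8. ?\<beta> i * 0))\<bar> \<le> 1"
    using nu_nonneg_le_1[of xs w] by simp
  then have "\<bar>nu xs w - (?\<alpha> + (\<Sum>i<8. ?\<beta> i * params xs m ! i))\<bar>
      \<le> 1 + \<bar>0 - ?\<alpha>\<bar> + 1 * (\<Sum>i<8. \<bar>?\<beta> i\<bar>)"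
    by (rule abs_diff_affine_perturb) (simp add: params_abs_le_1[OF m])
  then show ?thesis
    using affine_form_abs_bounds[OF w] by simp
qed

text \<open>For T \<ge> 7 we have T - 3 \<ge> (T + 1) / 2, and 68 / (T + 1) \<ge> 9 otherwise.\<close>
lemma four_word_frequency_error:
  assumes "m = occurrences [True, False] xs" and "length w = 4"
  shows "\<bar>nu xs w - (fst (affine_form w) + (\<Sum>i<8. snd (affine_form w) ! i * params xs m ! i))\<bar>
    \<le> 68 / real (Suc (length xs))"
proof (cases "7 \<le> length xs")
  case True
  then have "0 < real (length xs) - 3"
    by simp
  then have "34 / (real (length xs) - 3) \<le> 68 / real (Suc (length xs))"
    using True by (simp add: divide_simps)
  with four_word_frequency_error_long[OF assms True] show ?thesis
    by linarith
next
  case False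
  then have "9 \<le> 68 / real (Suc (length xs))"
    by (simp add: field_simps)
  with four_word_frequency_error_short[OF assms] show ?thesis
    by linarith
qed

theorem proposition3p3:
  shows "\<exists>(a :: bool list \<Rightarrow> real) (b :: bool list \<Rightarrow> nat \<Rightarrow> real) (\<epsilon> :: nat \<Rightarrow> real).
     \<epsilon> \<longlonglongrightarrow> 0 \<and>
     (\<forall>m L G xs. (\<forall>i<m. 1 \<le> L i \<and> 1 \<le> G i) \<longrightarrow> xs = block_seq m L G \<longrightarrow>
        (\<forall>w. length w = 4 \<longrightarrow>
           \<bar>nu xs w - (a w + (\<Sum>i<8. b w i * params xs m ! i))\<bar> \<le> \<epsilon> (length xs)))"
proof (intro exI[of _ "\<lambda>w. fst (affine_form w)"] exI[of _ "\<lambda>w i. snd (affine_form w) ! i"]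
    exI[of _ "\<lambda>n. 68 / real (Suc n)"] conjI allI impI)
  show "(\<lambda>n. 68 / real (Suc n)) \<longlonglongrightarrow> 0"
    using LIMSEQ_Suc[OF lim_const_over_n] .
next
  fix m L G xs and w :: "bool list"
  assume "\<forall>i<m. 1 \<le> L i \<and> 1 \<le> G i" "xs = block_seq m L G" "length w = 4"
  then show "\<bar>nu xs w - (fst (affine_form w) + (\<Sum>i<8. snd (affine_form w) ! i * params xs m ! i))\<bar>
      \<le> 68 / real (Suc (length xs))"
    by (intro four_word_frequency_error) (simp_all add: occurrences_10_block_seq)
qed

end
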